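(* Let $n\ge4$ and $\sigma=(\sigma_1,\dots,\sigma_{n-2})\in\Sigma_n$. Let $\mathbf A\in\mathcal G_n$ and let $x,y\in\mathcal G_n(\mathbf A,\mathbf C_n)$ with $x\ne y$. Then the following are equivalent: (1) $x^{-1}(\top)=y^{-1}(\top)$; (2) $\omega\circ x=\omega\circ y$; (3) there is a finite sequence $z_0=x,z_1,\dots,z_N=y$ of elements of $\mathcal G_n(\mathbf A,\mathbf C_n)$ such that for each $0\le j<N$ there is some $i_j\in\{1,\dots,n-3\}$ with $z_{j+1}=\sigma_{i_j}\circ z_j$ or $z_j=\sigma_{i_j}\circ z_{j+1}$.
   Context: $\mathbf C_n$ is the Heyting algebra whose universe is the chain $\{0<1<\dots<n-1\}$, with lattice operations min and max, $\bot=0$, $\top=n-1$, and $a\to b=\top$ if $a\le b$, $a\to b=b$ if $b<a$. $\mathcal G_n$ is the class of algebras isomorphic to subalgebras of direct powers of $\mathbf C_n$; $\mathcal G_n(\mathbf A,\mathbf C_n)$ is the set of Heyting homomorphisms $\mathbf A\to\mathbf C_n$; $\operatorname{ran}$ denotes image. $\mathbf 2$ is the two-element bounded lattice and $\omega\colon\mathbf C_n\to\{0,1\}$ is the bounded-lattice homomorphism with $\omega(\top)=1$, $\omega(k)=0$ for $k<\top$. For $n\ge4$: for $1\le i\le n-2$, $h_i$ is the endomorphism of $\mathbf C_n$ with $h_i(k)=k+1$ if $i\le k<n-1$ and $h_i(k)=k$ otherwise (so $\operatorname{ran}h_i=C_n\setminus\{i\}$). For $1\le i\le n-3$, $g_i$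 is the partial map with domain $C_n\setminus\{i\}$ given by $g_i(i+1)=i$ and $g_i(k)=k$ for $k\notin\{i,i+1\}$, and $f_i\colon C_n\setminus\{i+1\}\to C_n\setminus\{i\}$ is its inverse; these are partial endomorphisms (homomorphisms from a subalgebra of $\mathbf C_n$ into $\mathbf C_n$). $\Sigma_n=\{f_1,g_1\}\times\dots\times\{f_{n-3},g_{n-3}\}\times\{h_1,\dots,h_{n-2}\}$, whose elements are written $\sigma=(\sigma_1,\dots,\sigma_{n-2})$. For a homomorphism $z$ into $\mathbf C_n$ and a partial map $p$ on $C_n$, $p\circ z$ is defined exactly when $\operatorname{ran}z\subseteq\operatorname{dom}p$. *)

theory Defs
  imports Main "HOL-Library.FuncSet"
begin

record 'a halg =
  hcarrier :: "'a set"
  hmeet :: "'a \<Rightarrow> 'a \<Rightarrow> 'a"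
  hjoin :: "'a \<Rightarrow> 'a \<Rightarrow> 'a"
  himp  :: "'a \<Rightarrow> 'a \<Rightarrow> 'a"
  hbot  :: "'a"
  htop  :: "'a"

definition closed_alg :: "'a halg \<Rightarrow> bool" where
  "closed_alg A \<longleftrightarrow> hbot A \<in> hcarrier A \<and> htop A \<in> hcarrier A \<and>
     (\<forall>a\<in>hcarrier A. \<forall>b\<in>hcarrier A.
        hmeet A a b \<in> hcarrier A \<and> hjoin A a b \<in> hcarrier A \<and> himp A a b \<in> hcarrier A)"

definition hom :: "'a halg \<Rightarrow> 'b halg \<Rightarrow> ('a \<Rightarrow> 'b) \<Rightarrow> bool" where
  "hom A B h \<longleftrightarrow> h \<in> hcarrier A \<rightarrow> hcarrier B \<and>
     h (hbot A) = hbot B \<and> h (htop A) = htop B \<and>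
     (\<forall>a\<in>hcarrier A. \<forall>b\<in>hcarrier A.
        h (hmeet A a b) = hmeet B (h a) (h b) \<and>
        h (hjoin A a b) = hjoin B (h a) (h b) \<and>
        h (himp A a b) = himp B (h a) (h b))"

definition Cn :: "nat \<Rightarrow> nat halg" where
  "Cn n = \<lparr> hcarrier = {..<n}, hmeet = min, hjoin = max,
            himp = (\<lambda>a b. if a \<le> b then n - 1 else b),
            hbot = 0, htop = n - 1 \<rparr>"

definition Cn_power :: "nat \<Rightarrow> 'i set \<Rightarrow> ('i \<Rightarrow> nat) halg" where
  "Cn_power n I = \<lparr> hcarrier = I \<rightarrow>\<^sub>E {..<n},
      hmeet = (\<lambda>f g. \<lambda>i\<in>I. min (f i) (g i)),
      hjoin = (\<lambda>f g. \<lambda>i\<in>I. max (f i) (g i)),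
      himp = (\<lambda>f g. \<lambda>i\<in>I. himp (Cn n) (f i) (g i)),
      hbot = (\<lambda>i\<in>I. 0), htop = (\<lambda>i\<in>I. n - 1) \<rparr>"

text \<open>A belongs to G_n (witnessed by the index set I): A is an algebra isomorphic
  to a subalgebra of C_n^I, i.e. there is an injective homomorphism A -> C_n^I.\<close>
definition in_Gn :: "nat \<Rightarrow> 'i set \<Rightarrow> 'a halg \<Rightarrow> bool" where
  "in_Gn n I A \<longleftrightarrow> closed_alg A \<and>
     (\<exists>e. hom A (Cn_power n I) e \<and> inj_on e (hcarrier A))"

definition HomC :: "'a halg \<Rightarrow> nat \<Rightarrow> ('a \<Rightarrow> nat) set" where
  "HomC A n = {h. hom A (Cn n) h \<and> h \<in> extensional (hcarrier A)}"

definition omega :: "nat \<Rightarrow> nat \<Rightarrow> nat" where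
  "omega n k = (if k = n - 1 then 1 else 0)"

section \<open>Partial endomorphisms: (domain, map)\<close>

type_synonym pmap = "nat set \<times> (nat \<Rightarrow> nat)"

definition h_map :: "nat \<Rightarrow> nat \<Rightarrow> pmap" where
  "h_map n i = ({..<n}, \<lambda>k. if i \<le> k \<and> k < n - 1 then k + 1 else k)"

definition g_map :: "nat \<Rightarrow> nat \<Rightarrow> pmap" where
  "g_map n i = ({..<n} - {i}, \<lambda>k. if k = i + 1 then i else k)"

definition f_map :: "nat \<Rightarrow> nat \<Rightarrow> pmap" where
  "f_map n i = ({..<n} - {i + 1}, \<lambda>k. if k = i then i + 1 else k)"

definition Sigma_n :: "nat \<Rightarrow> (nat \<Rightarrow> pmap) set" where
  "Sigma_n n = {\<sigma>. (\<forall>i\<in>{1..n-3}. \<sigma> i = f_map n i \<or> \<sigma> i = g_map n i) \<and>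
                    (\<exists>i\<in>{1..n-2}. \<sigma> (n - 2) = h_map n i)}"

definition comp_eq :: "'a halg \<Rightarrow> pmap \<Rightarrow> ('a \<Rightarrow> nat) \<Rightarrow> ('a \<Rightarrow> nat) \<Rightarrow> bool" where
  "comp_eq A p u v \<longleftrightarrow> u ` hcarrier A \<subseteq> fst p \<and> (\<forall>a\<in>hcarrier A. v a = snd p (u a))"

end

theory Submission
  imports Defs
begin

text \<open>
  Each \<open>\<sigma>\<^sub>i\<close> with \<open>i \<le> n - 3\<close> fixes \<open>\<top>\<close> and sends nothing else to \<open>\<top>\<close>, so steps of a walk
  preserve \<open>x\<inverse>(\<top>)\<close>. Conversely, if the image of a homomorphism \<open>u\<close> misses \<open>i\<close> but contains
  \<open>i + 1\<close>, then \<open>g\<^sub>i \<circ> u\<close> is again a homomorphism and \<open>u = f\<^sub>i \<circ> g\<^sub>i \<circ> u\<close>, so \<open>u\<close> and \<open>g\<^sub>i \<circ> u\<close>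
  are adjacent whichever of \<open>f\<^sub>i, g\<^sub>i\<close> is \<open>\<sigma>\<^sub>i\<close>. Closing gaps this way ends in a homomorphism
  whose image below \<open>\<top>\<close> is an initial segment. Since \<open>u a \<le> u b\<close> iff \<open>u (a \<rightarrow> b) = \<top>\<close>, the
  preorder induced by \<open>u\<close> depends only on \<open>u\<inverse>(\<top>)\<close>, and a gap-free homomorphism is determined
  by its top preimage and its preorder. So \<open>x\<close> and \<open>y\<close> with the same top preimage reach the
  same gap-free homomorphism.
\<close>

lemma HomC_D:
  assumes "u \<in> HomC A n"
  shows "\<And>a. a \<in> hcarrier A \<Longrightarrow> u a < n"
    and "u (hbot A) = 0" and "u (htop A) = n - 1"
    and "\<And>a b. a \<in> hcarrier A \<Longrightarrow> b \<in> hcarrier A \<Longrightarrow> u (hmeet A a b) = min (u a) (u b)"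
    and "\<And>a b. a \<in> hcarrier A \<Longrightarrow> b \<in> hcarrier A \<Longrightarrow> u (hjoin A a b) = max (u a) (u b)"
    and "\<And>a b. a \<in> hcarrier A \<Longrightarrow> b \<in> hcarrier A \<Longrightarrow>
           u (himp A a b) = (if u a \<le> u b then n - 1 else u b)"
    and "u \<in> extensional (hcarrier A)"
  using assms by (auto simp: HomC_def hom_def Cn_def Pi_def)

lemma HomC_I:
  assumes "\<And>a. a \<in> hcarrier A \<Longrightarrow> u a < n"
    and "u (hbot A) = 0" and "u (htop A) = n - 1"
    and "\<And>a b. a \<in> hcarrier A \<Longrightarrow> b \<in> hcarrier A \<Longrightarrow> u (hmeet A a b) = min (u a) (u b)"
    and "\<And>a b. a \<in> hcarrier A \<Longrightarrow> b \<in> hcarrier A \<Longrightarrow> u (hjoin A a b) = max (u a) (u b)"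
    and "\<And>a b. a \<in> hcarrier A \<Longrightarrow> b \<in> hcarrier A \<Longrightarrow>
           u (himp A a b) = (if u a \<le> u b then n - 1 else u b)"
    and "u \<in> extensional (hcarrier A)"
  shows "u \<in> HomC A n"
  using assms by (auto simp: HomC_def hom_def Cn_def Pi_def)

lemma HomC_comp_strict_mono:
  assumes cl: "closed_alg A" and u: "u \<in> HomC A n"
    and mono: "strict_mono_on (u ` hcarrier A) \<psi>"
    and bot: "\<psi> 0 = 0" and top: "\<psi> (n - 1) = n - 1"
    and bounded: "\<And>k. k \<in> u ` hcarrier A \<Longrightarrow> \<psi> k < n"
  shows "(\<lambda>a\<in>hcarrier A. \<psi> (u a)) \<in> HomC A n"
proof -
  let ?w = "\<lambda>a\<in>hcarrier A. \<psi> (u a)"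
  have le_iff: "\<psi> (u a) \<le> \<psi> (u b) \<longleftrightarrow> u a \<le> u b" if "a \<in> hcarrier A" "b \<in> hcarrier A" for a b
    using strict_mono_on_less_eq[OF mono] that by blast
  have closed: "hbot A \<in> hcarrier A" "htop A \<in> hcarrier A"
    "\<And>a b. a \<in> hcarrier A \<Longrightarrow> b \<in> hcarrier A \<Longrightarrow>
       hmeet A a b \<in> hcarrier A \<and> hjoin A a b \<in> hcarrier A \<and> himp A a b \<in> hcarrier A"
    using cl by (auto simp: closed_alg_def)
  show ?thesis
  proof (rule HomC_I)
    fix a b assume a: "a \<in> hcarrier A" and b: "b \<in> hcarrier A"
    show "?w (hmeet A a b) = min (?w a) (?w b)" "?w (hjoin A a b) = max (?w a) (?w b)"
      using closed(3)[OF a b] a b le_iff[OF a b] le_iff[OF b a]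
      by (auto simp: HomC_D(4,5)[OF u a b] min_def max_def)
    show "?w (himp A a b) = (if ?w a \<le> ?w b then n - 1 else ?w b)"
      using closed(3)[OF a b] a b le_iff[OF a b] top by (simp add: HomC_D(6)[OF u a b])
  qed (use closed bot top bounded HomC_D(2,3)[OF u] in auto)
qed

lemma HomC_le_if_same_top:
  assumes cl: "closed_alg A" and u: "u \<in> HomC A n" and v: "v \<in> HomC A n"
    and top: "\<And>a. a \<in> hcarrier A \<Longrightarrow> u a = n - 1 \<longleftrightarrow> v a = n - 1"
    and a: "a \<in> hcarrier A" and b: "b \<in> hcarrier A" and le: "u a \<le> u b"
  shows "v a \<le> v b"
proof -
  have "himp A a b \<in> hcarrier A" using cl a b by (auto simp: closed_alg_def)
  moreover have "u (himp A a b) = n - 1" using HomC_D(6)[OF u a b] le by simp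
  ultimately have "v (himp A a b) = n - 1" using top by blast
  thus ?thesis using HomC_D(6)[OF v a b] HomC_D(1)[OF v a] by (auto split: if_splits)
qed

definition gap_free :: "'a halg \<Rightarrow> nat \<Rightarrow> ('a \<Rightarrow> nat) \<Rightarrow> bool" where
  "gap_free A n u \<longleftrightarrow> (\<forall>a\<in>hcarrier A. u a < n - 1 \<longrightarrow> {..<u a} \<subseteq> u ` hcarrier A)"

lemma gap_free_smaller_disagreement:
  assumes top: "\<And>a. a \<in> hcarrier A \<Longrightarrow> u a = n - 1 \<longleftrightarrow> v a = n - 1"
    and ord: "\<And>a b. a \<in> hcarrier A \<Longrightarrow> b \<in> hcarrier A \<Longrightarrow> u a \<le> u b \<longleftrightarrow> v a \<le> v b"
    and gf: "gap_free A n v" and bounded: "\<And>a. a \<in> hcarrier A \<Longrightarrow> v a < n"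
    and a: "a \<in> hcarrier A" and less: "u a < v a"
  shows "\<exists>b\<in>hcarrier A. v b = u a \<and> u b < u a"
proof -
  have "u a \<noteq> n - 1" using less bounded[OF a] by linarith
  hence "v a < n - 1" using top[OF a] bounded[OF a] by linarith
  hence "u a \<in> v ` hcarrier A" using gf a less unfolding gap_free_def by auto
  then obtain b where b: "b \<in> hcarrier A" "v b = u a" by (metis imageE)
  have "\<not> v a \<le> v b" using b(2) less by simp
  hence "u b < u a" using ord[OF a b(1)] by simp
  with b show ?thesis by blast
qed

lemma gap_free_eqI:
  assumes top: "\<And>a. a \<in> hcarrier A \<Longrightarrow> u a = n - 1 \<longleftrightarrow> v a = n - 1"
    and ord: "\<And>a b. a \<in> hcarrier A \<Longrightarrow> b \<in> hcarrier A \<Longrightarrow> u a \<le> u b \<longleftrightarrow> v a \<le> v b"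
    and gf: "gap_free A n u" "gap_free A n v"
    and bounded: "\<And>a. a \<in> hcarrier A \<Longrightarrow> u a < n" "\<And>a. a \<in> hcarrier A \<Longrightarrow> v a < n"
    and a: "a \<in> hcarrier A"
  shows "u a = v a"
proof (rule ccontr)
  assume "u a \<noteq> v a"
  then obtain c where c: "c \<in> hcarrier A" "u c \<noteq> v c"
    and least: "\<And>b. b \<in> hcarrier A \<Longrightarrow> u b \<noteq> v b \<Longrightarrow> min (u c) (v c) \<le> min (u b) (v b)"
    using ex_has_least_nat[where P = "\<lambda>b. b \<in> hcarrier A \<and> u b \<noteq> v b"
        and m = "\<lambda>b. min (u b) (v b)"] a by blast
  show False
  proof (cases "u c < v c")
    case True
    then obtain b where "b \<in> hcarrier A" "v b = u c" "u b < u c"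
      using gap_free_smaller_disagreement[OF top ord gf(2) bounded(2) c(1)] by blast
    thus False using least[of b] True by fastforce
  next
    case False
    then obtain b where "b \<in> hcarrier A" "u b = v c" "v b < v c"
      using gap_free_smaller_disagreement[of A v n u, OF _ _ gf(1) bounded(1) c(1)] c(2) top ord
      by (metis linorder_neqE_nat)
    thus False using least[of b] False by fastforce
  qed
qed

lemma nat_boundary_between:
  fixes S :: "nat set"
  assumes "t \<notin> S" "m \<in> S" "t \<le> m"
  shows "\<exists>i. t \<le> i \<and> i < m \<and> i \<notin> S \<and> Suc i \<in> S"
  using assms
proof (induction m)
  case (Suc m)
  show ?case
  proof (cases "m \<in> S")
    case True
    with Suc.prems Suc.IH show ?thesis by (metis le_SucE less_SucI)
  next
    case False
    with Suc.prems show ?thesis by (intro exI[of _ m]) (auto simp: le_Suc_eq)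
  qed
qed simp

lemma HomC_not_gap_free_boundary:
  assumes cl: "closed_alg A" and u: "u \<in> HomC A n" and "\<not> gap_free A n u"
  obtains i where "i \<in> {1..n-3}" "i \<notin> u ` hcarrier A" "Suc i \<in> u ` hcarrier A"
proof -
  obtain a t where a: "a \<in> hcarrier A" "u a < n - 1" and t: "t < u a" "t \<notin> u ` hcarrier A"
    using assms(3) unfolding gap_free_def by blast
  have "0 \<in> u ` hcarrier A"
    using cl HomC_D(2)[OF u] by (force simp: closed_alg_def)
  with t have "1 \<le> t" by (cases t) auto
  obtain i where "t \<le> i" "i < u a" "i \<notin> u ` hcarrier A" "Suc i \<in> u ` hcarrier A"
    using nat_boundary_between[OF t(2), of "u a"] a(1) t(1) by auto
  with \<open>1 \<le> t\<close> a(2) show thesis by (intro that) auto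
qed

definition sigma_step ::
    "'a halg \<Rightarrow> nat \<Rightarrow> (nat \<Rightarrow> pmap) \<Rightarrow> ('a \<Rightarrow> nat) \<Rightarrow> ('a \<Rightarrow> nat) \<Rightarrow> bool" where
  "sigma_step A n \<sigma> u v \<longleftrightarrow> u \<in> HomC A n \<and> v \<in> HomC A n \<and>
     (\<exists>i\<in>{1..n-3}. comp_eq A (\<sigma> i) u v \<or> comp_eq A (\<sigma> i) v u)"

lemma symp_sigma_step: "symp (sigma_step A n \<sigma>)"
  unfolding sigma_step_def by (rule sympI) blast

lemma Sigma_n_top_iff:
  assumes "\<sigma> \<in> Sigma_n n" "i \<in> {1..n-3}"
  shows "snd (\<sigma> i) k = n - 1 \<longleftrightarrow> k = n - 1"
proof -
  have "\<sigma> i = f_map n i \<or> \<sigma> i = g_map n i" using assms unfolding Sigma_n_def by blast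
  thus ?thesis using assms(2) by (auto simp: f_map_def g_map_def split: if_splits)
qed

lemma rtranclp_sigma_step_top_iff:
  assumes "(sigma_step A n \<sigma>)\<^sup>*\<^sup>* u v" "\<sigma> \<in> Sigma_n n" "a \<in> hcarrier A"
  shows "v a = n - 1 \<longleftrightarrow> u a = n - 1"
  using assms(1)
proof (induction rule: rtranclp_induct)
  case (step b c)
  then obtain i where "i \<in> {1..n-3}" "comp_eq A (\<sigma> i) b c \<or> comp_eq A (\<sigma> i) c b"
    unfolding sigma_step_def by blast
  with Sigma_n_top_iff[OF assms(2)] assms(3) step.IH show ?case
    unfolding comp_eq_def by metis
qed simp

lemma rtranclp_sigma_step_iff_walk:
  assumes "x \<in> HomC A n"
  shows "(sigma_step A n \<sigma>)\<^sup>*\<^sup>* x y \<longleftrightarrow>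
    (\<exists>N z. z 0 = x \<and> z N = y \<and> (\<forall>j\<le>N. z j \<in> HomC A n) \<and>
       (\<forall>j<N. \<exists>i\<in>{1..n-3}. comp_eq A (\<sigma> i) (z j) (z (Suc j))
                            \<or> comp_eq A (\<sigma> i) (z (Suc j)) (z j)))"
  unfolding rtranclp_power relpowp_fun_conv sigma_step_def
proof (intro iffI; elim exE conjE)
  fix N z assume z: "z 0 = x" "z N = y"
    and walk: "\<forall>j<N. \<exists>i\<in>{1..n-3}. comp_eq A (\<sigma> i) (z j) (z (Suc j))
                                     \<or> comp_eq A (\<sigma> i) (z (Suc j)) (z j)"
    and hom: "\<forall>j\<le>N. z j \<in> HomC A n"
  have "\<forall>j<N. z j \<in> HomC A n \<and> z (Suc j) \<in> HomC A n" using hom by auto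
  with z walk show "\<exists>N z. z 0 = x \<and> z N = y \<and> (\<forall>j<N. z j \<in> HomC A n \<and> z (Suc j) \<in> HomC A n \<and>
      (\<exists>i\<in>{1..n-3}. comp_eq A (\<sigma> i) (z j) (z (Suc j)) \<or> comp_eq A (\<sigma> i) (z (Suc j)) (z j)))"
    by blast
next
  fix N z assume z: "z 0 = x" "z N = y"
    and steps: "\<forall>j<N. z j \<in> HomC A n \<and> z (Suc j) \<in> HomC A n \<and>
      (\<exists>i\<in>{1..n-3}. comp_eq A (\<sigma> i) (z j) (z (Suc j)) \<or> comp_eq A (\<sigma> i) (z (Suc j)) (z j))"
  have "z j \<in> HomC A n" if "j \<le> N" for j
    using that steps z(1) assms by (cases j) auto
  with z steps show "\<exists>N z. z 0 = x \<and> z N = y \<and> (\<forall>j\<le>N. z j \<in> HomC A n) \<and>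
      (\<forall>j<N. \<exists>i\<in>{1..n-3}. comp_eq A (\<sigma> i) (z j) (z (Suc j)) \<or> comp_eq A (\<sigma> i) (z (Suc j)) (z j))"
    by blast
qed

lemma sigma_step_close_gap:
  assumes cl: "closed_alg A" and \<sigma>: "\<sigma> \<in> Sigma_n n" and u: "u \<in> HomC A n"
    and i: "i \<in> {1..n-3}" "i \<notin> u ` hcarrier A" "Suc i \<in> u ` hcarrier A"
  obtains u' where "sigma_step A n \<sigma> u u'" "sum id (u' ` hcarrier A) < sum id (u ` hcarrier A)"
proof -
  let ?S = "u ` hcarrier A"
  define \<psi> where "\<psi> k = (if k = Suc i then i else k)" for k
  define u' where "u' = (\<lambda>a\<in>hcarrier A. \<psi> (u a))"
  have bounded: "\<And>k. k \<in> ?S \<Longrightarrow> k < n" using HomC_D(1)[OF u] by auto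
  have mono: "strict_mono_on ?S \<psi>"
  proof (rule strict_mono_onI)
    fix k l assume "k \<in> ?S" "l \<in> ?S" "k < l"
    with i(2) have "k \<noteq> i" by blast
    with \<open>k < l\<close> show "\<psi> k < \<psi> l" by (auto simp: \<psi>_def)
  qed
  have u': "u' \<in> HomC A n"
    unfolding u'_def
    by (rule HomC_comp_strict_mono[OF cl u mono]) (use i(1) bounded in \<open>auto simp: \<psi>_def\<close>)
  have "comp_eq A (g_map n i) u u'" "comp_eq A (f_map n i) u' u"
    using i(2) bounded by (force simp: comp_eq_def g_map_def f_map_def u'_def \<psi>_def)+
  moreover have "\<sigma> i = f_map n i \<or> \<sigma> i = g_map n i" using \<sigma> i(1) unfolding Sigma_n_def by blast
  ultimately have "sigma_step A n \<sigma> u u'" using u u' i(1) unfolding sigma_step_def by metis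
  moreover have "sum id (u' ` hcarrier A) < sum id ?S"
  proof -
    have "finite ?S" using bounded by (meson finite_lessThan finite_subset lessThan_iff subsetI)
    have "u' ` hcarrier A = \<psi> ` ?S" by (auto simp: u'_def image_image)
    hence "sum id (u' ` hcarrier A) = sum \<psi> ?S"
      using sum.reindex[OF strict_mono_on_imp_inj_on[OF mono]] by simp
    also have "\<dots> < sum id ?S"
      by (rule sum_strict_mono_ex1[OF \<open>finite ?S\<close>]) (use i(3) in \<open>auto simp: \<psi>_def\<close>)
    finally show ?thesis .
  qed
  ultimately show thesis by (rule that)
qed

lemma rtranclp_sigma_step_gap_free:
  assumes cl: "closed_alg A" and \<sigma>: "\<sigma> \<in> Sigma_n n"
  shows "u \<in> HomC A n \<Longrightarrow> \<exists>c. (sigma_step A n \<sigma>)\<^sup>*\<^sup>* u c \<and> c \<in> HomC A n \<and> gap_free A n c"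
proof (induction "sum id (u ` hcarrier A)" arbitrary: u rule: less_induct)
  case less
  show ?case
  proof (cases "gap_free A n u")
    case False
    then obtain i where "i \<in> {1..n-3}" "i \<notin> u ` hcarrier A" "Suc i \<in> u ` hcarrier A"
      using HomC_not_gap_free_boundary[OF cl less.prems] by blast
    then obtain u' where step: "sigma_step A n \<sigma> u u'"
      and smaller: "sum id (u' ` hcarrier A) < sum id (u ` hcarrier A)"
      using sigma_step_close_gap[OF cl \<sigma> less.prems] by blast
    have "u' \<in> HomC A n" using step unfolding sigma_step_def by blast
    then obtain c where "(sigma_step A n \<sigma>)\<^sup>*\<^sup>* u' c" "c \<in> HomC A n" "gap_free A n c"
      using less.hyps[OF smaller] by blast
    with step show ?thesis by (meson converse_rtranclp_into_rtranclp)
  qed (use less.prems in blast)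
qed

lemma rtranclp_sigma_step_if_same_top:
  assumes cl: "closed_alg A" and \<sigma>: "\<sigma> \<in> Sigma_n n"
    and x: "x \<in> HomC A n" and y: "y \<in> HomC A n"
    and top: "\<And>a. a \<in> hcarrier A \<Longrightarrow> x a = n - 1 \<longleftrightarrow> y a = n - 1"
  shows "(sigma_step A n \<sigma>)\<^sup>*\<^sup>* x y"
proof -
  obtain cx where cx: "(sigma_step A n \<sigma>)\<^sup>*\<^sup>* x cx" "cx \<in> HomC A n" "gap_free A n cx"
    using rtranclp_sigma_step_gap_free[OF cl \<sigma> x] by blast
  obtain cy where cy: "(sigma_step A n \<sigma>)\<^sup>*\<^sup>* y cy" "cy \<in> HomC A n" "gap_free A n cy"
    using rtranclp_sigma_step_gap_free[OF cl \<sigma> y] by blast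
  have same_top: "cx a = n - 1 \<longleftrightarrow> cy a = n - 1" if "a \<in> hcarrier A" for a
    using rtranclp_sigma_step_top_iff[OF cx(1) \<sigma> that] rtranclp_sigma_step_top_iff[OF cy(1) \<sigma> that]
      top[OF that] by blast
  have same_order: "cx a \<le> cx b \<longleftrightarrow> cy a \<le> cy b" if "a \<in> hcarrier A" "b \<in> hcarrier A" for a b
    using HomC_le_if_same_top[OF cl cx(2) cy(2) same_top that]
      HomC_le_if_same_top[OF cl cy(2) cx(2) same_top[symmetric] that] by blast
  have "cx = cy"
  proof (rule extensionalityI[OF HomC_D(7)[OF cx(2)] HomC_D(7)[OF cy(2)]])
    fix a assume "a \<in> hcarrier A"
    then show "cx a = cy a"
      using gap_free_eqI[OF same_top same_order cx(3) cy(3) HomC_D(1)[OF cx(2)] HomC_D(1)[OF cy(2)]]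
      by blast
  qed
  moreover have "(sigma_step A n \<sigma>)\<^sup>*\<^sup>* cy y"
    using cy(1) by (rule sympD[OF symp_rtranclp[OF symp_sigma_step]])
  ultimately show ?thesis using cx(1) by (metis rtranclp_trans)
qed

theorem lemma2p3:
  fixes n :: nat and \<sigma> :: "nat \<Rightarrow> pmap" and A :: "'a halg" and I :: "'i set"
    and x y :: "'a \<Rightarrow> nat"
  assumes "n \<ge> 4" and "\<sigma> \<in> Sigma_n n" and "in_Gn n I A"
    and "x \<in> HomC A n" and "y \<in> HomC A n" and "x \<noteq> y"
  shows "({a\<in>hcarrier A. x a = n - 1} = {a\<in>hcarrier A. y a = n - 1}
           \<longleftrightarrow> (\<forall>a\<in>hcarrier A. omega n (x a) = omega n (y a)))
       \<and> ((\<forall>a\<in>hcarrier A. omega n (x a) = omega n (y a))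
           \<longleftrightarrow> (\<exists>N z. z 0 = x \<and> z N = y \<and> (\<forall>j\<le>N. z j \<in> HomC A n) \<and>
                 (\<forall>j<N. \<exists>i\<in>{1..n-3}. comp_eq A (\<sigma> i) (z j) (z (Suc j))
                                      \<or> comp_eq A (\<sigma> i) (z (Suc j)) (z j))))"
proof -
  \<comment> \<open>\<open>n \<ge> 4\<close> is implied by any step index \<open>i \<in> {1..n-3}\<close>, and \<open>x \<noteq> y\<close> is not needed.\<close>
  have cl: "closed_alg A" using assms(3) unfolding in_Gn_def by blast
  let ?same_top = "\<forall>a\<in>hcarrier A. x a = n - 1 \<longleftrightarrow> y a = n - 1"
  have top_sets: "({a\<in>hcarrier A. x a = n - 1} = {a\<in>hcarrier A. y a = n - 1}) \<longleftrightarrow> ?same_top"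
    by blast
  have omega: "(\<forall>a\<in>hcarrier A. omega n (x a) = omega n (y a)) \<longleftrightarrow> ?same_top"
    unfolding omega_def by auto
  have walk: "?same_top \<longleftrightarrow> (sigma_step A n \<sigma>)\<^sup>*\<^sup>* x y"
  proof
    assume ?same_top
    then show "(sigma_step A n \<sigma>)\<^sup>*\<^sup>* x y"
      by (intro rtranclp_sigma_step_if_same_top[OF cl assms(2,4,5)]) blast
  next
    assume "(sigma_step A n \<sigma>)\<^sup>*\<^sup>* x y"
    then show ?same_top using rtranclp_sigma_step_top_iff[OF _ assms(2)] by metis
  qed
  show ?thesis
    by (simp only: top_sets omega walk rtranclp_sigma_step_iff_walk[OF assms(4)])
qed

end
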